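(* Let $k\ge1$ be an integer, $H_1,H_2>\tfrac12$ and $\lambda_1,\lambda_2>0$. For every $t,s\in\mathbb{R}$, the function $$h_{t,s}\big((x_1,y_1),\ldots,(x_k,y_k)\big)=\int_0^t\int_0^s\prod_{j=1}^k (a-x_j)_+^{-(\frac12+\frac{1-H_1}{k})}e^{-\lambda_1(a-x_j)_+}(b-y_j)_+^{-(\frac12+\frac{1-H_2}{k})}e^{-\lambda_2(b-y_j)_+}\,db\,da$$ is well defined and belongs to $L^2\big((\mathbb{R}^2)^k\big)$.
   Context: $(u)_+=u\,\mathbf 1(u>0)$, and a factor $(u)_+^{\gamma}e^{-\lambda(u)_+}$ is interpreted as $0$ when $u\le 0$. Integrals $\int_0^t$ with $t<0$ are oriented, $\int_0^t=-\int_t^0$. *)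

theory Defs
  imports "HOL-Analysis.Analysis"
begin

definition kern :: "nat \<Rightarrow> real \<Rightarrow> real \<Rightarrow> real \<Rightarrow> real" where
  "kern k H lam u = (if u > 0 then u powr (- (1/2 + (1 - H) / real k)) * exp (- lam * u) else 0)"

definition integrand :: "real \<Rightarrow> real \<Rightarrow> real \<Rightarrow> real \<Rightarrow> (real \<times> real) ^ 'k::finite \<Rightarrow> real \<Rightarrow> real \<Rightarrow> real" where
  "integrand H1 H2 lam1 lam2 z a b =
     (\<Prod>j\<in>UNIV. kern CARD('k) H1 lam1 (a - fst (z $ j)) * kern CARD('k) H2 lam2 (b - snd (z $ j)))"

text \<open>Oriented iterated integral: int_0^t int_0^s ... db da (interval_lebesgue_integral is oriented).\<close>
definition hfun :: "real \<Rightarrow> real \<Rightarrow> real \<Rightarrow> real \<Rightarrow> real \<Rightarrow> real \<Rightarrow> (real \<times> real) ^ 'k::finite \<Rightarrow> real" where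
  "hfun H1 H2 lam1 lam2 t s z =
     (LBINT a=0..t. (LBINT b=0..s. integrand H1 H2 lam1 lam2 z a b))"

end

theory Submission
  imports Defs
begin

text \<open>
  The integrand is nonnegative, so \<open>\<bar>h(z)\<bar>\<close> is dominated by the integral \<open>N(z)\<close> of the
  integrand over the rectangle, and it suffices to show that \<open>N\<close> is square integrable;
  then \<open>N(z) < \<infinity>\<close> almost everywhere, which is the well-definedness of \<open>h(z)\<close>.
  Expanding \<open>N(z)\<^sup>2\<close> as a fourfold integral over \<open>(a, b, a', b')\<close> and integrating in \<open>z\<close>
  first, the product structure of the integrand gives \<open>\<rho>\<^sub>1(a, a')\<^sup>k \<rho>\<^sub>2(b, b')\<^sup>k\<close>, where
  \<open>\<rho>(a, a') = \<integral> g(a - x) g(a' - x) dx\<close> is the covariance of the kernel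
  \<open>g(u) = u powr (-\<beta>) exp (-\<lambda> u)\<close>, \<open>\<beta> = 1/2 + (1 - H)/k\<close>.
  For every \<open>\<epsilon> > max 0 (2\<beta> - 1)\<close> the covariance is \<open>O(\<bar>a - a'\<bar> powr (-\<epsilon>))\<close> on bounded
  sets, and \<open>H > 1/2\<close> means exactly \<open>k (2\<beta> - 1) < 1\<close>, so \<open>\<epsilon>\<close> can be chosen with
  \<open>k \<epsilon> < 1\<close>, which makes \<open>\<rho>\<^sup>k\<close> integrable over the square of a bounded interval.
\<close>

lemma nn_integral_lborel_vec_pair_prod:
  fixes f g :: "real \<Rightarrow> real"
  assumes [measurable]: "f \<in> borel_measurable borel" "g \<in> borel_measurable borel"
    and nonneg: "\<And>x. f x \<ge> 0" "\<And>y. g y \<ge> 0"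
  shows "(\<integral>\<^sup>+z. ennreal (\<Prod>j\<in>UNIV. f (fst (z $ j)) * g (snd (z $ j))) \<partial>(lborel :: ((real \<times> real) ^ 'k::finite) measure))
    = (\<integral>\<^sup>+x. f x \<partial>lborel) ^ CARD('k) * (\<integral>\<^sup>+y. g y \<partial>lborel) ^ CARD('k)"
proof -
  define A where "A = range (\<lambda>j::'k. axis j (1::real, 0::real))"
  define B where "B = range (\<lambda>j::'k. axis j (0::real, 1::real))"
  define F where "F b = (if b \<in> A then (\<lambda>x. ennreal (f x)) else (\<lambda>x. ennreal (g x)))"
    for b :: "(real \<times> real) ^ 'k"
  have Basis: "(Basis :: ((real \<times> real) ^ 'k) set) = A \<union> B"
    by (auto simp: A_def B_def Basis_vec_def Basis_prod_def)
  have disjoint: "A \<inter> B = {}"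
    by (auto simp: A_def B_def axis_eq_axis zero_prod_def)
  have inj: "inj (\<lambda>j::'k. axis j (1::real, 0::real))" "inj (\<lambda>j::'k. axis j (0::real, 1::real))"
    by (auto intro!: injI simp: axis_eq_axis zero_prod_def)
  have F_A: "b \<in> A \<Longrightarrow> F b = (\<lambda>x. ennreal (f x))"
    and F_B: "b \<in> B \<Longrightarrow> F b = (\<lambda>x. ennreal (g x))" for b
    using disjoint by (auto simp: F_def)
  have prod_Basis: "(\<Prod>b\<in>Basis. h b) = (\<Prod>b\<in>A. h b) * (\<Prod>b\<in>B. h b)" for h :: "_ \<Rightarrow> ennreal"
    unfolding Basis by (rule prod.union_disjoint[OF _ _ disjoint]) (simp_all add: A_def B_def)
  have "(\<integral>\<^sup>+z. ennreal (\<Prod>j\<in>UNIV. f (fst (z $ j)) * g (snd (z $ j))) \<partial>(lborel :: ((real \<times> real) ^ 'k) measure))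
      = (\<integral>\<^sup>+z. (\<Prod>b\<in>Basis. F b (z \<bullet> b)) \<partial>lborel)"
  proof (rule nn_integral_cong)
    fix z :: "(real \<times> real) ^ 'k"
    have "(\<Prod>b\<in>A. F b (z \<bullet> b)) = (\<Prod>j\<in>UNIV. ennreal (f (fst (z $ j))))"
      unfolding A_def by (subst prod.reindex[OF inj(1)]) (auto simp: F_A[unfolded A_def] inner_axis inner_prod_def)
    moreover have "(\<Prod>b\<in>B. F b (z \<bullet> b)) = (\<Prod>j\<in>UNIV. ennreal (g (snd (z $ j))))"
      unfolding B_def by (subst prod.reindex[OF inj(2)]) (auto simp: F_B[unfolded B_def] inner_axis inner_prod_def)
    ultimately show "ennreal (\<Prod>j\<in>UNIV. f (fst (z $ j)) * g (snd (z $ j))) = (\<Prod>b\<in>Basis. F b (z \<bullet> b))"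
      using nonneg by (simp add: prod_Basis prod_ennreal prod.distrib ennreal_mult[symmetric] prod_nonneg)
  qed
  also have "\<dots> = (\<Prod>b\<in>Basis. (\<integral>\<^sup>+x. F b x \<partial>lborel))"
    by (rule nn_integral_lborel_prod) (auto simp: F_def)
  also have "\<dots> = (\<integral>\<^sup>+x. f x \<partial>lborel) ^ CARD('k) * (\<integral>\<^sup>+y. g y \<partial>lborel) ^ CARD('k)"
    using F_A F_B card_image[OF inj(1)] card_image[OF inj(2)] by (simp add: prod_Basis A_def B_def)
  finally show ?thesis .
qed

lemma abs_interval_lebesgue_integral_le:
  fixes f :: "real \<Rightarrow> real" and t :: real
  shows "ennreal \<bar>LBINT x=0..t. f x\<bar> \<le> (\<integral>\<^sup>+x. ennreal (indicator {min 0 t..max 0 t} x * \<bar>f x\<bar>) \<partial>lborel)"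
proof -
  have set_integral_le: "ennreal \<bar>LINT x:A|lborel. f x\<bar> \<le> (\<integral>\<^sup>+x. ennreal (indicator {min 0 t..max 0 t} x * \<bar>f x\<bar>) \<partial>lborel)"
    if A: "A \<subseteq> {min 0 t..max 0 t}" for A
  proof (cases "set_integrable lborel A f")
    case True
    have "ennreal \<bar>LINT x:A|lborel. f x\<bar> \<le> (\<integral>\<^sup>+x. ennreal (norm (indicator A x *\<^sub>R f x)) \<partial>lborel)"
      using integral_norm_bound_ennreal[OF True[unfolded set_integrable_def]]
      by (simp add: set_lebesgue_integral_def)
    also have "\<dots> \<le> (\<integral>\<^sup>+x. ennreal (indicator {min 0 t..max 0 t} x * \<bar>f x\<bar>) \<partial>lborel)"
      using A by (intro nn_integral_mono) (auto simp: indicator_def)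
    finally show ?thesis .
  next
    case False
    then show ?thesis
      by (simp add: set_lebesgue_integral_def set_integrable_def not_integrable_integral_eq)
  qed
  show ?thesis
  proof (cases "0 \<le> t")
    case True
    then have "{0<..<t} \<subseteq> {min 0 t..max 0 t}" by auto
    with True show ?thesis
      using set_integral_le einterval_eq_Icc[of 0 t]
      by (simp add: interval_lebesgue_integral_def zero_ereal_def)
  next
    case False
    then have "{t<..<0} \<subseteq> {min 0 t..max 0 t}" by auto
    with False show ?thesis
      using set_integral_le einterval_eq_Icc[of t 0]
      by (simp add: interval_lebesgue_integral_def zero_ereal_def)
  qed
qed

lemma nn_integral_iterated_square:
  assumes [measurable]: "\<And>a. f a \<in> borel_measurable N" "(\<lambda>a. \<integral>\<^sup>+b. f a b \<partial>N) \<in> borel_measurable M"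
  shows "(\<integral>\<^sup>+a. \<integral>\<^sup>+b. f a b \<partial>N \<partial>M) ^ 2 = (\<integral>\<^sup>+a. \<integral>\<^sup>+b. \<integral>\<^sup>+a'. \<integral>\<^sup>+b'. f a b * f a' b' \<partial>N \<partial>M \<partial>N \<partial>M)"
proof -
  define S where "S = (\<integral>\<^sup>+a. \<integral>\<^sup>+b. f a b \<partial>N \<partial>M)"
  have "S ^ 2 = (\<integral>\<^sup>+a. (\<integral>\<^sup>+b. f a b \<partial>N) * S \<partial>M)"
    by (simp add: power2_eq_square nn_integral_multc flip: S_def)
  also have "\<dots> = (\<integral>\<^sup>+a. \<integral>\<^sup>+b. f a b * S \<partial>N \<partial>M)"
    by (simp add: nn_integral_multc)
  also have "\<dots> = (\<integral>\<^sup>+a. \<integral>\<^sup>+b. \<integral>\<^sup>+a'. \<integral>\<^sup>+b'. f a b * f a' b' \<partial>N \<partial>M \<partial>N \<partial>M)"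
    by (simp add: S_def nn_integral_cmult)
  finally show ?thesis by (simp add: S_def)
qed

lemma nn_integral_iterated_mult_separate:
  fixes f :: "'a::euclidean_space \<Rightarrow> 'a \<Rightarrow> ennreal" and g :: "'b::euclidean_space \<Rightarrow> 'b \<Rightarrow> ennreal"
  assumes [measurable]: "case_prod f \<in> borel_measurable (lborel \<Otimes>\<^sub>M lborel)"
    "case_prod g \<in> borel_measurable (lborel \<Otimes>\<^sub>M lborel)"
  shows "(\<integral>\<^sup>+a. \<integral>\<^sup>+b. \<integral>\<^sup>+a'. \<integral>\<^sup>+b'. f a a' * g b b' \<partial>lborel \<partial>lborel \<partial>lborel \<partial>lborel)
    = (\<integral>\<^sup>+a. \<integral>\<^sup>+a'. f a a' \<partial>lborel \<partial>lborel) * (\<integral>\<^sup>+b. \<integral>\<^sup>+b'. g b b' \<partial>lborel \<partial>lborel)"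
  by (simp add: nn_integral_cmult nn_integral_multc)

lemma nn_integral_lborel_swap:
  fixes f :: "'a::euclidean_space \<Rightarrow> 'b::euclidean_space \<Rightarrow> ennreal"
  assumes "case_prod f \<in> borel_measurable (lborel \<Otimes>\<^sub>M lborel)"
  shows "(\<integral>\<^sup>+x. \<integral>\<^sup>+y. f x y \<partial>lborel \<partial>lborel) = (\<integral>\<^sup>+y. \<integral>\<^sup>+x. f x y \<partial>lborel \<partial>lborel)"
  using lborel_pair.Fubini'[OF assms] by simp

definition powr_exp_kernel :: "real \<Rightarrow> real \<Rightarrow> real \<Rightarrow> real" where
  "powr_exp_kernel \<beta> lam u = (if u > 0 then u powr (- \<beta>) * exp (- lam * u) else 0)"

lemma powr_exp_kernel_nonneg [simp]: "powr_exp_kernel \<beta> lam u \<ge> 0"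
  by (simp add: powr_exp_kernel_def)

lemma borel_measurable_powr_exp_kernel [measurable]: "powr_exp_kernel \<beta> lam \<in> borel_measurable borel"
  unfolding powr_exp_kernel_def by measurable

lemma nn_integral_powr_exp_kernel_finite:
  assumes "\<beta> < 1" and lam: "lam > 0"
  shows "(\<integral>\<^sup>+u. powr_exp_kernel \<beta> lam u \<partial>lborel) < \<infinity>"
proof -
  define p where "p = 1 - \<beta>"
  have p: "p > 0" using assms by (simp add: p_def)
  have "(\<integral>\<^sup>+u. powr_exp_kernel \<beta> lam u \<partial>lborel)
      = ennreal (1 / lam) * (\<integral>\<^sup>+x. powr_exp_kernel \<beta> lam (x / lam) \<partial>lborel)"
    using nn_integral_real_affine[of "\<lambda>u. ennreal (powr_exp_kernel \<beta> lam u)" "1 / lam" 0] lam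
    by simp
  also have "(\<integral>\<^sup>+x. powr_exp_kernel \<beta> lam (x / lam) \<partial>lborel)
      = (\<integral>\<^sup>+x. ennreal ((1 / lam) powr (p - 1)) * ennreal (indicator {0..} x * x powr (p - 1) / exp x) \<partial>lborel)"
  proof (rule nn_integral_cong)
    fix x :: real
    show "ennreal (powr_exp_kernel \<beta> lam (x / lam))
        = ennreal ((1 / lam) powr (p - 1)) * ennreal (indicator {0..} x * x powr (p - 1) / exp x)"
      using lam by (cases "x > 0")
        (auto simp: powr_exp_kernel_def p_def powr_divide exp_minus ennreal_mult[symmetric]
          indicator_def field_simps)
  qed
  also have "\<dots> = ennreal ((1 / lam) powr (p - 1)) * ennreal (Gamma p)"
    by (subst nn_integral_cmult) (auto simp: Gamma_conv_nn_integral_real[OF p])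
  finally show ?thesis by (simp add: ennreal_mult_less_top)
qed

lemma abs_powr_exp_eq_powr_exp_kernel:
  "\<bar>y\<bar> powr (- q) * exp (- \<bar>y\<bar>) = powr_exp_kernel q 1 y + powr_exp_kernel q 1 (- y)"
  by (auto simp: powr_exp_kernel_def)

lemma nn_integral_abs_powr_interval_le:
  fixes c l r q :: real
  assumes c: "c \<in> {l..r}"
  shows "(\<integral>\<^sup>+x. ennreal (indicator {l..r} x * \<bar>c - x\<bar> powr (- q)) \<partial>lborel)
    \<le> ennreal (exp (r - l)) * (2 * (\<integral>\<^sup>+u. powr_exp_kernel q 1 u \<partial>lborel))"
proof -
  have "(\<integral>\<^sup>+x. ennreal (indicator {l..r} x * \<bar>c - x\<bar> powr (- q)) \<partial>lborel)
      \<le> (\<integral>\<^sup>+x. ennreal (exp (r - l)) * ennreal (\<bar>c - x\<bar> powr (- q) * exp (- \<bar>c - x\<bar>)) \<partial>lborel)"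
  proof (rule nn_integral_mono)
    fix x :: real
    show "ennreal (indicator {l..r} x * \<bar>c - x\<bar> powr (- q))
        \<le> ennreal (exp (r - l)) * ennreal (\<bar>c - x\<bar> powr (- q) * exp (- \<bar>c - x\<bar>))"
    proof (cases "x \<in> {l..r}")
      case True
      then have "1 \<le> exp (r - l) * exp (- \<bar>c - x\<bar>)"
        using c by (auto simp: exp_add[symmetric])
      from mult_right_mono[OF this, of "\<bar>c - x\<bar> powr (- q)"] True show ?thesis
        by (simp add: ennreal_mult[symmetric] mult_ac)
    qed simp
  qed
  also have "\<dots> = ennreal (exp (r - l)) *
      (\<integral>\<^sup>+x. ennreal (powr_exp_kernel q 1 (c - x)) + ennreal (powr_exp_kernel q 1 (x - c)) \<partial>lborel)"
    by (subst nn_integral_cmult) (auto simp: abs_powr_exp_eq_powr_exp_kernel ennreal_plus)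
  also have "(\<integral>\<^sup>+x. ennreal (powr_exp_kernel q 1 (c - x)) + ennreal (powr_exp_kernel q 1 (x - c)) \<partial>lborel)
      = 2 * (\<integral>\<^sup>+u. powr_exp_kernel q 1 u \<partial>lborel)"
  proof -
    have "(\<integral>\<^sup>+x. powr_exp_kernel q 1 (c - x) \<partial>lborel) = (\<integral>\<^sup>+u. powr_exp_kernel q 1 u \<partial>lborel)"
      using nn_integral_real_affine[of "\<lambda>u. ennreal (powr_exp_kernel q 1 u)" "-1" c] by simp
    moreover have "(\<integral>\<^sup>+x. powr_exp_kernel q 1 (x - c) \<partial>lborel) = (\<integral>\<^sup>+u. powr_exp_kernel q 1 u \<partial>lborel)"
      using nn_integral_real_affine[of "\<lambda>u. ennreal (powr_exp_kernel q 1 u)" 1 "- c"] by simp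
    ultimately show ?thesis
      by (subst nn_integral_add) (auto simp: mult_2)
  qed
  finally show ?thesis .
qed

lemma nn_integral_interval_square_abs_powr_finite:
  fixes l r q :: real
  assumes "q < 1"
  shows "(\<integral>\<^sup>+a. \<integral>\<^sup>+a'. ennreal (indicator {l..r} a * indicator {l..r} a' * \<bar>a - a'\<bar> powr (- q))
    \<partial>lborel \<partial>lborel) < \<infinity>"
proof -
  define M where "M = ennreal (exp (r - l)) * (2 * (\<integral>\<^sup>+u. powr_exp_kernel q 1 u \<partial>lborel))"
  have M: "M < \<infinity>"
    using nn_integral_powr_exp_kernel_finite[OF assms, of 1]
    by (simp add: M_def ennreal_mult_less_top mult_2)
  have "(\<integral>\<^sup>+a. \<integral>\<^sup>+a'. ennreal (indicator {l..r} a * indicator {l..r} a' * \<bar>a - a'\<bar> powr (- q))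
      \<partial>lborel \<partial>lborel) \<le> (\<integral>\<^sup>+a. indicator {l..r} a * M \<partial>lborel)"
  proof (rule nn_integral_mono)
    fix a :: real
    show "(\<integral>\<^sup>+a'. ennreal (indicator {l..r} a * indicator {l..r} a' * \<bar>a - a'\<bar> powr (- q)) \<partial>lborel)
        \<le> indicator {l..r} a * M"
      using nn_integral_abs_powr_interval_le[of a l r q]
      by (cases "a \<in> {l..r}") (simp_all add: M_def)
  qed
  also have "\<dots> = emeasure lborel {l..r} * M"
    by (simp add: nn_integral_multc)
  also have "\<dots> < \<infinity>"
    using M by (simp add: ennreal_mult_less_top emeasure_lborel_Icc_eq)
  finally show ?thesis .
qed

lemma powr_add_le_powr_mult:
  fixes \<beta> \<epsilon> D :: real
  assumes "\<epsilon> > 0"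
  shows "\<exists>C\<ge>0. \<forall>u d. 0 < u \<longrightarrow> 0 < d \<longrightarrow> d \<le> D \<longrightarrow>
    (u + d) powr (- \<beta>) \<le> C * d powr (- \<epsilon>) * (u powr (\<epsilon> - \<beta>) + 1)"
proof (cases "\<epsilon> \<le> \<beta>")
  case True
  show ?thesis
  proof (intro exI[of _ 1] conjI allI impI)
    fix u d :: real
    assume u: "0 < u" and d: "0 < d" "d \<le> D"
    have "(u + d) powr (- \<beta>) = (u + d) powr (\<epsilon> - \<beta>) * (u + d) powr (- \<epsilon>)"
      by (simp add: powr_add[symmetric])
    also have "\<dots> \<le> u powr (\<epsilon> - \<beta>) * d powr (- \<epsilon>)"
      using True u d assms by (intro mult_mono powr_mono2') auto
    also have "\<dots> \<le> 1 * d powr (- \<epsilon>) * (u powr (\<epsilon> - \<beta>) + 1)"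
      by (simp add: algebra_simps)
    finally show "(u + d) powr (- \<beta>) \<le> 1 * d powr (- \<epsilon>) * (u powr (\<epsilon> - \<beta>) + 1)" .
  qed simp
next
  case False
  define q where "q = \<epsilon> - \<beta>"
  have q: "q > 0" using False by (simp add: q_def)
  show ?thesis
  proof (intro exI[of _ "2 powr q * (1 + D powr q)"] conjI allI impI)
    fix u d :: real
    assume u: "0 < u" and d: "0 < d" "d \<le> D"
    have "(u + d) powr q \<le> (2 * max u D) powr q"
      using q u d by (intro powr_mono2) auto
    also have "\<dots> = 2 powr q * max u D powr q"
      using u by (simp add: powr_mult)
    also have "\<dots> \<le> 2 powr q * (u powr q + D powr q)"
      by (intro mult_left_mono) (auto simp: max_def)
    also have "\<dots> \<le> 2 powr q * ((1 + D powr q) * (u powr q + 1))"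
      by (intro mult_left_mono) (auto simp: algebra_simps)
    finally have "(u + d) powr q * (u + d) powr (- \<epsilon>)
        \<le> 2 powr q * ((1 + D powr q) * (u powr q + 1)) * d powr (- \<epsilon>)"
      using u d assms by (intro mult_mono powr_mono2') auto
    then show "(u + d) powr (- \<beta>) \<le> 2 powr q * (1 + D powr q) * d powr (- \<epsilon>) * (u powr (\<epsilon> - \<beta>) + 1)"
      by (simp add: powr_add[symmetric] q_def mult_ac)
  qed simp
qed

definition kernel_cov :: "real \<Rightarrow> real \<Rightarrow> real \<Rightarrow> real \<Rightarrow> ennreal" where
  "kernel_cov \<beta> lam a a' =
    (\<integral>\<^sup>+x. ennreal (powr_exp_kernel \<beta> lam (a - x) * powr_exp_kernel \<beta> lam (a' - x)) \<partial>lborel)"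

lemma kernel_cov_commute: "kernel_cov \<beta> lam a a' = kernel_cov \<beta> lam a' a"
  by (simp add: kernel_cov_def mult.commute)

lemma kernel_cov_eq_shift:
  "kernel_cov \<beta> lam a a' =
    (\<integral>\<^sup>+u. ennreal (powr_exp_kernel \<beta> lam u * powr_exp_kernel \<beta> lam (u + \<bar>a - a'\<bar>)) \<partial>lborel)"
proof -
  have shift: "kernel_cov \<beta> lam a a' =
      (\<integral>\<^sup>+u. ennreal (powr_exp_kernel \<beta> lam u * powr_exp_kernel \<beta> lam (u + (a' - a))) \<partial>lborel)"
    if "a \<le> a'" for a a'
    unfolding kernel_cov_def
    using nn_integral_real_affine[of "\<lambda>x. ennreal (powr_exp_kernel \<beta> lam (a - x) * powr_exp_kernel \<beta> lam (a' - x))" "-1" a]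
    by (simp add: algebra_simps)
  show ?thesis
  proof (cases "a \<le> a'")
    case True
    then show ?thesis using shift[OF True] by (simp add: abs_if)
  next
    case False
    then show ?thesis using shift[of a' a] kernel_cov_commute[of \<beta> lam a a'] by (simp add: abs_if)
  qed
qed

lemma powr_exp_kernel_mult_shift_le:
  fixes \<beta> lam \<epsilon> D :: real
  assumes lam: "lam > 0" and \<epsilon>: "\<epsilon> > 0"
  shows "\<exists>C\<ge>0. \<forall>u d. 0 < d \<longrightarrow> d \<le> D \<longrightarrow>
    powr_exp_kernel \<beta> lam u * powr_exp_kernel \<beta> lam (u + d)
      \<le> C * d powr (- \<epsilon>) * (powr_exp_kernel (2 * \<beta> - \<epsilon>) lam u + powr_exp_kernel \<beta> lam u)"
proof -
  let ?K = "powr_exp_kernel"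
  obtain C where C: "C \<ge> 0" and C_le: "\<And>u d. 0 < u \<Longrightarrow> 0 < d \<Longrightarrow> d \<le> D \<Longrightarrow>
      (u + d) powr (- \<beta>) \<le> C * d powr (- \<epsilon>) * (u powr (\<epsilon> - \<beta>) + 1)"
    using powr_add_le_powr_mult[OF \<epsilon>, of D \<beta>] by blast
  have "?K \<beta> lam u * ?K \<beta> lam (u + d) \<le> C * d powr (- \<epsilon>) * (?K (2 * \<beta> - \<epsilon>) lam u + ?K \<beta> lam u)"
    if d: "0 < d" "d \<le> D" for u d
  proof (cases "u > 0")
    case u: True
    have "?K \<beta> lam u * ?K \<beta> lam (u + d) \<le> u powr (- \<beta>) * exp (- lam * u) * (u + d) powr (- \<beta>)"
      using u d lam by (simp add: powr_exp_kernel_def mult_left_mono mult_left_le)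
    also have "\<dots> \<le> u powr (- \<beta>) * exp (- lam * u) * (C * d powr (- \<epsilon>) * (u powr (\<epsilon> - \<beta>) + 1))"
      using C_le[OF u d] by (intro mult_left_mono) auto
    also have "u powr (- \<beta>) * u powr (\<epsilon> - \<beta>) = u powr (- (2 * \<beta> - \<epsilon>))"
      by (subst powr_add[symmetric]) (simp add: algebra_simps)
    then have "u powr (- \<beta>) * exp (- lam * u) * (C * d powr (- \<epsilon>) * (u powr (\<epsilon> - \<beta>) + 1))
        = C * d powr (- \<epsilon>) * (?K (2 * \<beta> - \<epsilon>) lam u + ?K \<beta> lam u)"
      using u by (simp add: powr_exp_kernel_def distrib_left mult_ac)
    finally show ?thesis .
  qed (use C in \<open>simp add: powr_exp_kernel_def\<close>)
  with C show ?thesis by blast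
qed

lemma kernel_cov_le_powr:
  fixes \<beta> lam \<epsilon> D :: real
  assumes \<beta>: "\<beta> < 1" and lam: "lam > 0" and \<epsilon>: "\<epsilon> > 0" "2 * \<beta> - 1 < \<epsilon>"
  shows "\<exists>C\<ge>0. \<forall>a a'. a \<noteq> a' \<longrightarrow> \<bar>a - a'\<bar> \<le> D \<longrightarrow>
    kernel_cov \<beta> lam a a' \<le> ennreal (C * \<bar>a - a'\<bar> powr (- \<epsilon>))"
proof -
  let ?K = "powr_exp_kernel"
  obtain C where C: "C \<ge> 0" and C_le: "\<And>u d. 0 < d \<Longrightarrow> d \<le> D \<Longrightarrow>
      ?K \<beta> lam u * ?K \<beta> lam (u + d) \<le> C * d powr (- \<epsilon>) * (?K (2 * \<beta> - \<epsilon>) lam u + ?K \<beta> lam u)"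
    using powr_exp_kernel_mult_shift_le[OF lam \<epsilon>(1), of D \<beta>] by blast
  define I where "I = (\<integral>\<^sup>+u. ?K (2 * \<beta> - \<epsilon>) lam u \<partial>lborel) + (\<integral>\<^sup>+u. ?K \<beta> lam u \<partial>lborel)"
  have I: "I < \<infinity>"
    using nn_integral_powr_exp_kernel_finite[OF _ lam, of "2 * \<beta> - \<epsilon>"]
      nn_integral_powr_exp_kernel_finite[OF \<beta> lam] \<epsilon> by (simp add: I_def)
  show ?thesis
  proof (intro exI[of _ "C * enn2real I"] conjI allI impI)
    fix a a' :: real
    assume "a \<noteq> a'" "\<bar>a - a'\<bar> \<le> D"
    then have "kernel_cov \<beta> lam a a'
        \<le> (\<integral>\<^sup>+u. ennreal (C * \<bar>a - a'\<bar> powr (- \<epsilon>)) *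
              (ennreal (?K (2 * \<beta> - \<epsilon>) lam u) + ennreal (?K \<beta> lam u)) \<partial>lborel)"
      unfolding kernel_cov_eq_shift using C
      by (intro nn_integral_mono) (simp add: C_le ennreal_mult[symmetric] ennreal_plus[symmetric] del: ennreal_plus)
    also have "\<dots> = ennreal (C * \<bar>a - a'\<bar> powr (- \<epsilon>)) * I"
      unfolding I_def by (simp add: nn_integral_cmult nn_integral_add)
    also have "\<dots> = ennreal (C * enn2real I * \<bar>a - a'\<bar> powr (- \<epsilon>))"
      using C I by (simp add: ennreal_mult ennreal_enn2real_if mult_ac)
    finally show "kernel_cov \<beta> lam a a' \<le> ennreal (C * enn2real I * \<bar>a - a'\<bar> powr (- \<epsilon>))" .
  qed (use C in simp)
qed

lemma nn_integral_kernel_cov_power_finite: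
  fixes \<beta> lam l r :: real and n :: nat
  assumes n: "n > 0" and \<beta>: "real n * (2 * \<beta> - 1) < 1" and lam: "lam > 0"
  shows "(\<integral>\<^sup>+a. \<integral>\<^sup>+a'. ennreal (indicator {l..r} a * indicator {l..r} a') * kernel_cov \<beta> lam a a' ^ n
    \<partial>lborel \<partial>lborel) < \<infinity>"
proof -
  define \<epsilon> where "\<epsilon> = (max (2 * \<beta> - 1) 0 + 1 / real n) / 2"
  have n1: "real n \<ge> 1" using n by simp
  have \<beta>n: "2 * \<beta> - 1 < 1 / real n" using \<beta> n1 by (simp add: field_simps)
  have "\<beta> < 1" using \<beta>n n1 by (smt (verit) divide_le_eq_1)
  have "0 < \<epsilon>" "2 * \<beta> - 1 < \<epsilon>" using \<beta>n n1 by (auto simp: \<epsilon>_def max_def)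
  have n\<epsilon>: "real n * \<epsilon> < 1"
    using \<beta> n1 by (auto simp: \<epsilon>_def max_def field_simps)
  obtain C where C: "C \<ge> 0" and C_le: "\<And>a a'. a \<noteq> a' \<Longrightarrow> \<bar>a - a'\<bar> \<le> r - l \<Longrightarrow>
      kernel_cov \<beta> lam a a' \<le> ennreal (C * \<bar>a - a'\<bar> powr (- \<epsilon>))"
    using kernel_cov_le_powr[OF \<open>\<beta> < 1\<close> lam \<open>0 < \<epsilon>\<close> \<open>2 * \<beta> - 1 < \<epsilon>\<close>, of "r - l"] by blast
  have pointwise: "AE a' in lborel.
      ennreal (indicator {l..r} a * indicator {l..r} a') * kernel_cov \<beta> lam a a' ^ n
      \<le> ennreal (C ^ n) * ennreal (indicator {l..r} a * indicator {l..r} a' * \<bar>a - a'\<bar> powr (- (n * \<epsilon>)))"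
    for a :: real
    using AE_lborel_singleton[of a]
  proof eventually_elim
    case (elim a')
    show ?case
    proof (cases "a \<in> {l..r} \<and> a' \<in> {l..r}")
      case True
      then have "kernel_cov \<beta> lam a a' ^ n \<le> ennreal (C * \<bar>a - a'\<bar> powr (- \<epsilon>)) ^ n"
        using elim by (intro power_mono C_le) auto
      also have "\<dots> = ennreal (C ^ n * \<bar>a - a'\<bar> powr (- (n * \<epsilon>)))"
        using C elim by (simp add: ennreal_power power_mult_distrib powr_power mult_ac)
      finally show ?thesis
        using True C by (simp add: ennreal_mult)
    qed auto
  qed
  have "(\<integral>\<^sup>+a. \<integral>\<^sup>+a'. ennreal (indicator {l..r} a * indicator {l..r} a') * kernel_cov \<beta> lam a a' ^ n
      \<partial>lborel \<partial>lborel)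
    \<le> (\<integral>\<^sup>+a. \<integral>\<^sup>+a'. ennreal (C ^ n) *
      ennreal (indicator {l..r} a * indicator {l..r} a' * \<bar>a - a'\<bar> powr (- (n * \<epsilon>))) \<partial>lborel \<partial>lborel)"
    by (intro nn_integral_mono nn_integral_mono_AE pointwise)
  also have "\<dots> = ennreal (C ^ n) * (\<integral>\<^sup>+a. \<integral>\<^sup>+a'.
      ennreal (indicator {l..r} a * indicator {l..r} a' * \<bar>a - a'\<bar> powr (- (n * \<epsilon>))) \<partial>lborel \<partial>lborel)"
    by (simp add: nn_integral_cmult)
  also have "\<dots> < \<infinity>"
    using nn_integral_interval_square_abs_powr_finite[OF n\<epsilon>, of l r]
    by (simp add: ennreal_mult_less_top)
  finally show ?thesis .
qed

lemma kern_eq_powr_exp_kernel: "kern k H lam = powr_exp_kernel (1/2 + (1 - H) / real k) lam"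
  by (rule ext) (simp add: kern_def powr_exp_kernel_def)

lemma borel_measurable_kern [measurable]: "kern k H lam \<in> borel_measurable borel"
  by (simp add: kern_eq_powr_exp_kernel)

lemma measurable_fst_vec_nth [measurable (raw)]:
  "f \<in> M \<rightarrow>\<^sub>M (borel :: ((real \<times> real) ^ 'k::finite) measure) \<Longrightarrow> (\<lambda>x. fst (f x $ j)) \<in> borel_measurable M"
  by (rule measurable_compose[of f M borel "\<lambda>z. fst (z $ j)"])
     (auto intro!: borel_measurable_continuous_onI continuous_intros)

lemma measurable_snd_vec_nth [measurable (raw)]:
  "f \<in> M \<rightarrow>\<^sub>M (borel :: ((real \<times> real) ^ 'k::finite) measure) \<Longrightarrow> (\<lambda>x. snd (f x $ j)) \<in> borel_measurable M"
  by (rule measurable_compose[of f M borel "\<lambda>z. snd (z $ j)"])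
     (auto intro!: borel_measurable_continuous_onI continuous_intros)

lemma borel_measurable_integrand [measurable (raw)]:
  assumes [measurable]: "f \<in> M \<rightarrow>\<^sub>M (borel :: ((real \<times> real) ^ 'k::finite) measure)"
    "g \<in> borel_measurable M" "h \<in> borel_measurable M"
  shows "(\<lambda>x. integrand H1 H2 lam1 lam2 (f x) (g x) (h x)) \<in> borel_measurable M"
  unfolding integrand_def by measurable

lemma integrand_nonneg: "integrand H1 H2 lam1 lam2 z a b \<ge> 0"
  by (simp add: integrand_def kern_eq_powr_exp_kernel prod_nonneg)

lemma nn_integral_integrand_mult:
  fixes H1 H2 lam1 lam2 a b a' b' :: real
  defines "\<beta>1 \<equiv> 1/2 + (1 - H1) / real CARD('k::finite)" and "\<beta>2 \<equiv> 1/2 + (1 - H2) / real CARD('k)"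
  shows "(\<integral>\<^sup>+z. ennreal (integrand H1 H2 lam1 lam2 z a b * integrand H1 H2 lam1 lam2 z a' b')
      \<partial>(lborel :: ((real \<times> real) ^ 'k) measure))
    = kernel_cov \<beta>1 lam1 a a' ^ CARD('k) * kernel_cov \<beta>2 lam2 b b' ^ CARD('k)"
proof -
  let ?K1 = "powr_exp_kernel \<beta>1 lam1" and ?K2 = "powr_exp_kernel \<beta>2 lam2"
  have "integrand H1 H2 lam1 lam2 z a b * integrand H1 H2 lam1 lam2 z a' b'
      = (\<Prod>j\<in>UNIV. (?K1 (a - fst (z $ j)) * ?K1 (a' - fst (z $ j))) *
                    (?K2 (b - snd (z $ j)) * ?K2 (b' - snd (z $ j))))" for z :: "(real \<times> real) ^ 'k"
    by (simp add: integrand_def kern_eq_powr_exp_kernel \<beta>1_def \<beta>2_def prod.distrib[symmetric] mult_ac)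
  then show ?thesis
    unfolding kernel_cov_def
    by (simp add: nn_integral_lborel_vec_pair_prod[of "\<lambda>x. ?K1 (a - x) * ?K1 (a' - x)" "\<lambda>y. ?K2 (b - y) * ?K2 (b' - y)"])
qed

definition hfun_majorant ::
    "real \<Rightarrow> real \<Rightarrow> real \<Rightarrow> real \<Rightarrow> real \<Rightarrow> real \<Rightarrow> (real \<times> real) ^ 'k::finite \<Rightarrow> ennreal" where
  "hfun_majorant H1 H2 lam1 lam2 t s z =
    (\<integral>\<^sup>+a. \<integral>\<^sup>+b. ennreal (indicator {min 0 t..max 0 t} a * indicator {min 0 s..max 0 s} b *
      integrand H1 H2 lam1 lam2 z a b) \<partial>lborel \<partial>lborel)"

lemma borel_measurable_hfun_majorant [measurable]:
  "hfun_majorant H1 H2 lam1 lam2 t s \<in> borel_measurable borel"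
  unfolding hfun_majorant_def by measurable

lemma nn_integral_hfun_majorant_square:
  fixes H1 H2 lam1 lam2 t s :: real
  defines "\<beta>1 \<equiv> 1/2 + (1 - H1) / real CARD('k::finite)" and "\<beta>2 \<equiv> 1/2 + (1 - H2) / real CARD('k)"
    and "I \<equiv> {min 0 t..max 0 t}" and "J \<equiv> {min 0 s..max 0 s}"
  shows "(\<integral>\<^sup>+z. hfun_majorant H1 H2 lam1 lam2 t s z ^ 2 \<partial>(lborel :: ((real \<times> real) ^ 'k) measure))
    = (\<integral>\<^sup>+a. \<integral>\<^sup>+a'. ennreal (indicator I a * indicator I a') * kernel_cov \<beta>1 lam1 a a' ^ CARD('k)
        \<partial>lborel \<partial>lborel)
    * (\<integral>\<^sup>+b. \<integral>\<^sup>+b'. ennreal (indicator J b * indicator J b') * kernel_cov \<beta>2 lam2 b b' ^ CARD('k)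
        \<partial>lborel \<partial>lborel)"
proof -
  have [measurable]: "I \<in> sets borel" "J \<in> sets borel"
    by (simp_all add: I_def J_def)
  define F where "F z a b = ennreal (indicator I a * indicator J b * integrand H1 H2 lam1 lam2 z a b)"
    for z :: "(real \<times> real) ^ 'k" and a b
  define P1 where "P1 a a' = ennreal (indicator I a * indicator I a') * kernel_cov \<beta>1 lam1 a a' ^ CARD('k)"
    for a a'
  define P2 where "P2 b b' = ennreal (indicator J b * indicator J b') * kernel_cov \<beta>2 lam2 b b' ^ CARD('k)"
    for b b'
  have [measurable]: "case_prod P1 \<in> borel_measurable (lborel \<Otimes>\<^sub>M lborel)"
    "case_prod P2 \<in> borel_measurable (lborel \<Otimes>\<^sub>M lborel)"
    unfolding P1_def P2_def kernel_cov_def by measurable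
  have square: "hfun_majorant H1 H2 lam1 lam2 t s z ^ 2
      = (\<integral>\<^sup>+a. \<integral>\<^sup>+b. \<integral>\<^sup>+a'. \<integral>\<^sup>+b'. F z a b * F z a' b' \<partial>lborel \<partial>lborel \<partial>lborel \<partial>lborel)" for z
    unfolding hfun_majorant_def I_def[symmetric] J_def[symmetric] F_def[symmetric]
    by (rule nn_integral_iterated_square) (unfold F_def, measurable)
  have product: "(\<integral>\<^sup>+z. F z a b * F z a' b' \<partial>lborel) = P1 a a' * P2 b b'" for a b a' b'
  proof -
    have "F z a b * F z a' b' = ennreal (indicator I a * indicator I a' * (indicator J b * indicator J b')) *
        ennreal (integrand H1 H2 lam1 lam2 z a b * integrand H1 H2 lam1 lam2 z a' b')" for z
      by (simp add: F_def integrand_nonneg ennreal_mult[symmetric] mult_ac)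
    then have "(\<integral>\<^sup>+z. F z a b * F z a' b' \<partial>lborel)
        = ennreal (indicator I a * indicator I a' * (indicator J b * indicator J b')) *
          (\<integral>\<^sup>+z. ennreal (integrand H1 H2 lam1 lam2 z a b * integrand H1 H2 lam1 lam2 z a' b')
            \<partial>(lborel :: ((real \<times> real) ^ 'k) measure))"
      by (simp add: nn_integral_cmult)
    also have "\<dots> = P1 a a' * P2 b b'"
      unfolding nn_integral_integrand_mult
      by (simp add: P1_def P2_def \<beta>1_def \<beta>2_def ennreal_mult mult_ac)
    finally show ?thesis .
  qed
  have "(\<integral>\<^sup>+z. hfun_majorant H1 H2 lam1 lam2 t s z ^ 2 \<partial>(lborel :: ((real \<times> real) ^ 'k) measure))
      = (\<integral>\<^sup>+z. \<integral>\<^sup>+a. \<integral>\<^sup>+b. \<integral>\<^sup>+a'. \<integral>\<^sup>+b'. F z a b * F z a' b' \<partial>lborel \<partial>lborel \<partial>lborel \<partial>lborel \<partial>lborel)"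
    by (intro nn_integral_cong square)
  also have "\<dots> = (\<integral>\<^sup>+a. \<integral>\<^sup>+b. \<integral>\<^sup>+a'. \<integral>\<^sup>+b'. \<integral>\<^sup>+z. F z a b * F z a' b' \<partial>lborel \<partial>lborel \<partial>lborel \<partial>lborel \<partial>lborel)"
    apply (subst nn_integral_lborel_swap, unfold F_def, measurable)
    apply (intro nn_integral_cong, subst nn_integral_lborel_swap, measurable)+
    done
  also have "\<dots> = (\<integral>\<^sup>+a. \<integral>\<^sup>+a'. P1 a a' \<partial>lborel \<partial>lborel) * (\<integral>\<^sup>+b. \<integral>\<^sup>+b'. P2 b b' \<partial>lborel \<partial>lborel)"
    by (simp add: product nn_integral_iterated_mult_separate)
  finally show ?thesis
    by (simp add: P1_def P2_def)
qed

lemma nn_integral_hfun_majorant_square_finite: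
  fixes H1 H2 lam1 lam2 t s :: real
  assumes "H1 > 1/2" "H2 > 1/2" "lam1 > 0" "lam2 > 0"
  shows "(\<integral>\<^sup>+z. hfun_majorant H1 H2 lam1 lam2 t s z ^ 2 \<partial>(lborel :: ((real \<times> real) ^ 'k::finite) measure)) < \<infinity>"
proof -
  have k: "CARD('k) > 0" by simp
  have "real CARD('k) * (2 * (1/2 + (1 - H) / real CARD('k)) - 1) < 1" if "H > 1/2" for H :: real
    using that by (simp add: field_simps)
  then show ?thesis
    using assms nn_integral_kernel_cov_power_finite[OF k]
    by (simp add: nn_integral_hfun_majorant_square ennreal_mult_less_top)
qed

lemma abs_hfun_le_hfun_majorant:
  "ennreal \<bar>hfun H1 H2 lam1 lam2 t s z\<bar> \<le> hfun_majorant H1 H2 lam1 lam2 t s z"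
proof -
  let ?F = "integrand H1 H2 lam1 lam2 z"
  have "ennreal \<bar>hfun H1 H2 lam1 lam2 t s z\<bar>
      \<le> (\<integral>\<^sup>+a. ennreal (indicator {min 0 t..max 0 t} a * \<bar>LBINT b=0..s. ?F a b\<bar>) \<partial>lborel)"
    unfolding hfun_def by (rule abs_interval_lebesgue_integral_le)
  also have "\<dots> \<le> (\<integral>\<^sup>+a. ennreal (indicator {min 0 t..max 0 t} a) *
      (\<integral>\<^sup>+b. ennreal (indicator {min 0 s..max 0 s} b * \<bar>?F a b\<bar>) \<partial>lborel) \<partial>lborel)"
    using abs_interval_lebesgue_integral_le[of s]
    by (intro nn_integral_mono) (auto simp: ennreal_mult intro!: mult_left_mono)
  also have "\<dots> = hfun_majorant H1 H2 lam1 lam2 t s z"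
    unfolding hfun_majorant_def
    by (intro nn_integral_cong, subst nn_integral_cmult[symmetric], measurable)
       (simp add: integrand_nonneg ennreal_mult[symmetric] mult_ac)
  finally show ?thesis .
qed

lemma set_integrable_integrand:
  assumes "hfun_majorant H1 H2 lam1 lam2 t s z < \<infinity>"
  shows "set_integrable lborel ({min 0 t..max 0 t} \<times> {min 0 s..max 0 s})
    (\<lambda>(a, b). integrand H1 H2 lam1 lam2 z a b)"
  unfolding set_integrable_def
proof (rule integrableI_bounded)
  let ?R = "{min 0 t..max 0 t} \<times> {min 0 s..max 0 s}"
  let ?F = "\<lambda>(a, b). ennreal (indicator {min 0 t..max 0 t} a * indicator {min 0 s..max 0 s} b *
    integrand H1 H2 lam1 lam2 z a b)"
  show "(\<lambda>p. indicator ?R p *\<^sub>R (\<lambda>(a, b). integrand H1 H2 lam1 lam2 z a b) p) \<in> borel_measurable lborel"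
    by (subst lborel_prod[symmetric]) measurable
  have "(\<integral>\<^sup>+p. ennreal (norm (indicator ?R p *\<^sub>R (\<lambda>(a, b). integrand H1 H2 lam1 lam2 z a b) p)) \<partial>lborel)
      = (\<integral>\<^sup>+p. ?F p \<partial>(lborel \<Otimes>\<^sub>M lborel))"
    by (subst lborel_prod[symmetric], rule nn_integral_cong)
       (auto simp: indicator_times integrand_nonneg abs_mult split: prod.splits)
  also have "\<dots> = hfun_majorant H1 H2 lam1 lam2 t s z"
  proof -
    have "?F \<in> borel_measurable (lborel \<Otimes>\<^sub>M lborel)" by measurable
    then show ?thesis
      by (simp add: lborel.nn_integral_fst[symmetric] hfun_majorant_def)
  qed
  finally show "(\<integral>\<^sup>+p. ennreal (norm (indicator ?R p *\<^sub>R (\<lambda>(a, b). integrand H1 H2 lam1 lam2 z a b) p)) \<partial>lborel) < \<infinity>"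
    using assms by simp
qed

lemma borel_measurable_hfun [measurable]: "hfun H1 H2 lam1 lam2 t s \<in> borel_measurable borel"
  unfolding hfun_def interval_lebesgue_integral_def set_lebesgue_integral_def by measurable

lemma AE_set_integrable_integrand:
  assumes "(\<integral>\<^sup>+z. hfun_majorant H1 H2 lam1 lam2 t s z ^ 2 \<partial>(lborel :: ((real \<times> real) ^ 'k::finite) measure)) < \<infinity>"
  shows "AE z in (lborel :: ((real \<times> real) ^ 'k) measure).
    set_integrable lborel ({min 0 t..max 0 t} \<times> {min 0 s..max 0 s}) (\<lambda>(a, b). integrand H1 H2 lam1 lam2 z a b)"
proof -
  have "AE z in (lborel :: ((real \<times> real) ^ 'k) measure). hfun_majorant H1 H2 lam1 lam2 t s z ^ 2 \<noteq> \<infinity>"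
    by (rule nn_integral_PInf_AE) (use assms in auto)
  then show ?thesis
    by eventually_elim (simp add: set_integrable_integrand top.not_eq_extremum[symmetric] power_eq_top_ennreal)
qed

lemma integrable_hfun_square:
  fixes H1 H2 lam1 lam2 t s :: real
  assumes "(\<integral>\<^sup>+z. hfun_majorant H1 H2 lam1 lam2 t s z ^ 2 \<partial>(lborel :: ((real \<times> real) ^ 'k::finite) measure)) < \<infinity>"
  shows "integrable (lborel :: ((real \<times> real) ^ 'k) measure) (\<lambda>z. (hfun H1 H2 lam1 lam2 t s z)\<^sup>2)"
proof (rule integrableI_bounded)
  let ?h = "hfun H1 H2 lam1 lam2 t s :: (real \<times> real) ^ 'k \<Rightarrow> real"
  let ?M = "hfun_majorant H1 H2 lam1 lam2 t s :: (real \<times> real) ^ 'k \<Rightarrow> ennreal"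
  have "ennreal (norm ((?h z)\<^sup>2)) \<le> ?M z ^ 2" for z
  proof -
    have "ennreal (norm ((?h z)\<^sup>2)) = ennreal \<bar>?h z\<bar> ^ 2"
      by (simp add: ennreal_power)
    also have "\<dots> \<le> ?M z ^ 2"
      by (intro power_mono abs_hfun_le_hfun_majorant) simp
    finally show ?thesis .
  qed
  then have "(\<integral>\<^sup>+z. ennreal (norm ((?h z)\<^sup>2)) \<partial>lborel)
      \<le> (\<integral>\<^sup>+z. ?M z ^ 2 \<partial>lborel)"
    by (rule nn_integral_mono)
  then show "(\<integral>\<^sup>+z. ennreal (norm ((?h z)\<^sup>2)) \<partial>lborel) < \<infinity>"
    using assms by (rule le_less_trans)
qed measurable

theorem mainTheorem2:
  fixes H1 H2 lam1 lam2 t s :: real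
  assumes "H1 > 1/2" and "H2 > 1/2" and "lam1 > 0" and "lam2 > 0"
  shows "(AE z in (lborel :: ((real \<times> real) ^ 'k::finite) measure).
            set_integrable lborel ({min 0 t..max 0 t} \<times> {min 0 s..max 0 s})
              (\<lambda>(a, b). integrand H1 H2 lam1 lam2 z a b))
         \<and> hfun H1 H2 lam1 lam2 t s \<in> borel_measurable (lborel :: ((real \<times> real) ^ 'k) measure)
         \<and> integrable (lborel :: ((real \<times> real) ^ 'k) measure) (\<lambda>z. (hfun H1 H2 lam1 lam2 t s z)\<^sup>2)"
proof -
  have majorant_L2: "(\<integral>\<^sup>+z. hfun_majorant H1 H2 lam1 lam2 t s z ^ 2 \<partial>(lborel :: ((real \<times> real) ^ 'k) measure)) < \<infinity>"
    using nn_integral_hfun_majorant_square_finite[OF assms] .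
  show ?thesis
    using AE_set_integrable_integrand[OF majorant_L2] integrable_hfun_square[OF majorant_L2] by simp
qed

end
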